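(* Let $(S,\mathcal F,\mathcal L)$ be a $p$-local finite group with $S$ abelian. Then $(S,\mathcal F,\mathcal L)$ is nilpotent if and only if one of the following two conditions is satisfied: (1) two elements $a,b\in S$ are $\mathcal F$-conjugate if and only if they are equal; (2) $\mathrm{Aut}_{\mathcal F}(S)$ is the trivial group.
   Context: Elements $a,b\in S$ are $\mathcal F$-conjugate if there is $\phi\in\mathrm{Hom}_{\mathcal F}(\langle a\rangle,S)$ with $\phi(a)=b$. Let $p$ be a prime and $S$ a finite $p$-group. For $P,Q\le S$, $\mathrm{Hom}_S(P,Q)$ is the set of maps $c_g\colon x\mapsto gxg^{-1}$ with $g\in S$, $gPg^{-1}\le Q$, and $\mathrm{Aut}_S(P)=\mathrm{Hom}_S(P,P)$. A fusion system $\mathcal F$ over $S$ is a category whose objects are the subgroups of $S$, with $\mathrm{Hom}_S(P,Q)\subseteq\mathrm{Hom}_{\mathcal F}(P,Q)\subseteq \mathrm{Inj}(P,Q)$, such that every morphism factors as an $\mathcal F$-isomorphism followed by an inclusion. Subgroups are $\mathcal F$-conjugate if they are isomorphic in $\mathcal F$. $P$ is fully centralized (resp. fully normalized) if $|C_S(P)|\ge |C_S(P')|$ (resp. $|N_S(P)|\ge|N_S(P')|$) for all $P'$ $\mathcal F$-conjugate to $P$. $\mathcal F$ is saturated if (I) every fully normalized $P$ is fully centralized and $\mathrm{Aut}_S(P)$ is a Sylow $p$-subgroup of $\mathrm{Aut}_{\mathcal F}(P)$, and (II) whenever $\phi\in\mathrm{Hom}_{\mathcal F}(P,S)$ with $\phi(P)$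 fully centralized, $\phi$ extends to a morphism in $\mathcal F$ defined on $N_\phi=\{g\in N_S(P):\phi c_g\phi^{-1}\in \mathrm{Aut}_S(\phi(P))\}$. $P$ is $\mathcal F$-centric if $C_S(P')\le P'$ for all $P'$ $\mathcal F$-conjugate to $P$; $\mathcal F^c$ is the full subcategory on these. A centric linking system associated to $\mathcal F$ is a category $\mathcal L$ with objects the $\mathcal F$-centric subgroups, a functor $\pi\colon\mathcal L\to\mathcal F^c$ which is the identity on objects, and monomorphisms $\delta_P\colon P\to\mathrm{Aut}_{\mathcal L}(P)$, such that (A) $Z(P)$ (via $\delta_P$) acts freely on $\mathrm{Mor}_{\mathcal L}(P,Q)$ by composition and $\pi$ induces a bijection $\mathrm{Mor}_{\mathcal L}(P,Q)/Z(P)\to\mathrm{Hom}_{\mathcal F}(P,Q)$; (B) $\pi(\delta_P(g))=c_g$ for $g\in P$; (C) $f\circ\delta_P(g)=\delta_Q(\pi(f)(g))\circ f$ for $f\in\mathrm{Mor}_{\mathcal L}(P,Q)$, $g\in P$. A $p$-local finite group is a triple $(S,\mathcal F,\mathcal L)$ with $\mathcal F$ a saturated fusion system over $S$ and $\mathcal L$ an associated centric linking system. $(S,\mathcal F,\mathcal L)$ is called nilpotent if $\mathcal F=\mathcal F_S(S)$, the fusion system with $\mathrm{Hom}_{\mathcal F_S(S)}(P,Q)=\mathrm{Hom}_S(P,Q)$. *)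

theory Defs
  imports "HOL-Algebra.Algebra" "HOL-Library.FuncSet"
begin

definition p_group :: "nat \<Rightarrow> ('a, 'b) monoid_scheme \<Rightarrow> bool" where
  "p_group p S \<longleftrightarrow> Factorial_Ring.prime p \<and> group S \<and> finite (carrier S) \<and> (\<exists>n. card (carrier S) = p ^ n)"

definition conjS :: "('a, 'b) monoid_scheme \<Rightarrow> 'a \<Rightarrow> 'a \<Rightarrow> 'a" where
  "conjS S g x = g \<otimes>\<^bsub>S\<^esub> x \<otimes>\<^bsub>S\<^esub> inv\<^bsub>S\<^esub> g"

(* Hom_S(P,Q); maps are represented as functions extensional on their domain P *)
definition HomS :: "('a, 'b) monoid_scheme \<Rightarrow> 'a set \<Rightarrow> 'a set \<Rightarrow> ('a \<Rightarrow> 'a) set" where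
  "HomS S P Q = {restrict (conjS S g) P | g. g \<in> carrier S \<and> conjS S g ` P \<subseteq> Q}"

definition InjS :: "('a, 'b) monoid_scheme \<Rightarrow> 'a set \<Rightarrow> 'a set \<Rightarrow> ('a \<Rightarrow> 'a) set" where
  "InjS S P Q = {\<phi>. \<phi> \<in> extensional P \<and> \<phi> ` P \<subseteq> Q \<and> inj_on \<phi> P \<and>
                    (\<forall>x\<in>P. \<forall>y\<in>P. \<phi> (x \<otimes>\<^bsub>S\<^esub> y) = \<phi> x \<otimes>\<^bsub>S\<^esub> \<phi> y)}"

definition CS :: "('a, 'b) monoid_scheme \<Rightarrow> 'a set \<Rightarrow> 'a set" where
  "CS S P = {g \<in> carrier S. \<forall>x\<in>P. g \<otimes>\<^bsub>S\<^esub> x = x \<otimes>\<^bsub>S\<^esub> g}"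

definition NS :: "('a, 'b) monoid_scheme \<Rightarrow> 'a set \<Rightarrow> 'a set" where
  "NS S P = {g \<in> carrier S. conjS S g ` P = P}"

definition ZS :: "('a, 'b) monoid_scheme \<Rightarrow> 'a set \<Rightarrow> 'a set" where
  "ZS S P = {z \<in> P. \<forall>x\<in>P. z \<otimes>\<^bsub>S\<^esub> x = x \<otimes>\<^bsub>S\<^esub> z}"

(* A fusion system is given by its morphism sets F P Q = Hom_F(P,Q) for subgroups P, Q of S *)
type_synonym 'a fusion = "'a set \<Rightarrow> 'a set \<Rightarrow> ('a \<Rightarrow> 'a) set"

definition F_iso :: "('a, 'b) monoid_scheme \<Rightarrow> 'a fusion \<Rightarrow> 'a set \<Rightarrow> 'a set \<Rightarrow> ('a \<Rightarrow> 'a) \<Rightarrow> bool" where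
  "F_iso S F P Q \<phi> \<longleftrightarrow> \<phi> \<in> F P Q \<and>
     (\<exists>\<psi>\<in>F Q P. (\<forall>x\<in>P. \<psi> (\<phi> x) = x) \<and> (\<forall>y\<in>Q. \<phi> (\<psi> y) = y))"

definition fusion_system :: "('a, 'b) monoid_scheme \<Rightarrow> 'a fusion \<Rightarrow> bool" where
  "fusion_system S F \<longleftrightarrow>
     (\<forall>P Q. subgroup P S \<longrightarrow> subgroup Q S \<longrightarrow> HomS S P Q \<subseteq> F P Q \<and> F P Q \<subseteq> InjS S P Q) \<and>
     (\<forall>P Q R \<phi> \<psi>. subgroup P S \<longrightarrow> subgroup Q S \<longrightarrow> subgroup R S \<longrightarrow>
        \<phi> \<in> F P Q \<longrightarrow> \<psi> \<in> F Q R \<longrightarrow> restrict (\<psi> \<circ> \<phi>) P \<in> F P R) \<and>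
     (\<forall>P Q \<phi>. subgroup P S \<longrightarrow> subgroup Q S \<longrightarrow> \<phi> \<in> F P Q \<longrightarrow> F_iso S F P (\<phi> ` P) \<phi>)"

definition F_conj_sub :: "('a, 'b) monoid_scheme \<Rightarrow> 'a fusion \<Rightarrow> 'a set \<Rightarrow> 'a set \<Rightarrow> bool" where
  "F_conj_sub S F P Q \<longleftrightarrow> subgroup P S \<and> subgroup Q S \<and> (\<exists>\<phi>. F_iso S F P Q \<phi>)"

definition F_conj_elt :: "('a, 'b) monoid_scheme \<Rightarrow> 'a fusion \<Rightarrow> 'a \<Rightarrow> 'a \<Rightarrow> bool" where
  "F_conj_elt S F a b \<longleftrightarrow> (\<exists>\<phi>\<in>F (generate S {a}) (carrier S). \<phi> a = b)"

definition fully_centralized :: "('a, 'b) monoid_scheme \<Rightarrow> 'a fusion \<Rightarrow> 'a set \<Rightarrow> bool" where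
  "fully_centralized S F P \<longleftrightarrow> (\<forall>P'. F_conj_sub S F P P' \<longrightarrow> card (CS S P') \<le> card (CS S P))"

definition fully_normalized :: "('a, 'b) monoid_scheme \<Rightarrow> 'a fusion \<Rightarrow> 'a set \<Rightarrow> bool" where
  "fully_normalized S F P \<longleftrightarrow> (\<forall>P'. F_conj_sub S F P P' \<longrightarrow> card (NS S P') \<le> card (NS S P))"

(* H is a Sylow p-subgroup of the finite group G (H \<subseteq> G a subgroup, as will be the case below) *)
definition sylow_in :: "nat \<Rightarrow> 'c set \<Rightarrow> 'c set \<Rightarrow> bool" where
  "sylow_in p H G \<longleftrightarrow> H \<subseteq> G \<and> (\<exists>k. card H = p ^ k \<and> p ^ k dvd card G \<and> \<not> p ^ (k + 1) dvd card G)"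

definition Nphi :: "('a, 'b) monoid_scheme \<Rightarrow> 'a set \<Rightarrow> ('a \<Rightarrow> 'a) \<Rightarrow> 'a set" where
  "Nphi S P \<phi> = {g \<in> NS S P.
      restrict (\<lambda>y. \<phi> (conjS S g (inv_into P \<phi> y))) (\<phi> ` P) \<in> HomS S (\<phi> ` P) (\<phi> ` P)}"

definition saturated :: "nat \<Rightarrow> ('a, 'b) monoid_scheme \<Rightarrow> 'a fusion \<Rightarrow> bool" where
  "saturated p S F \<longleftrightarrow> fusion_system S F \<and>
     (\<forall>P. subgroup P S \<longrightarrow> fully_normalized S F P \<longrightarrow>
        fully_centralized S F P \<and> sylow_in p (HomS S P P) (F P P)) \<and>
     (\<forall>P \<phi>. subgroup P S \<longrightarrow> \<phi> \<in> F P (carrier S) \<longrightarrow> fully_centralized S F (\<phi> ` P) \<longrightarrow>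
        (\<exists>\<psi>\<in>F (Nphi S P \<phi>) (carrier S). \<forall>x\<in>P. \<psi> x = \<phi> x))"

definition F_centric :: "('a, 'b) monoid_scheme \<Rightarrow> 'a fusion \<Rightarrow> 'a set \<Rightarrow> bool" where
  "F_centric S F P \<longleftrightarrow> subgroup P S \<and> (\<forall>P'. F_conj_sub S F P P' \<longrightarrow> CS S P' \<subseteq> P')"

(* A category with objects the F-centric subgroups, morphism sets lmor P Q,
   composition lcomp P Q R g f = g \<circ> f : P \<rightarrow> R (for f : P \<rightarrow> Q, g : Q \<rightarrow> R), identities lid P,
   the functor \<pi> on morphisms (lpi P Q f \<in> Hom_F(P,Q)), and \<delta>_P = ldelta P. *)
record ('a, 'm) linking =
  lmor :: "'a set \<Rightarrow> 'a set \<Rightarrow> 'm set"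
  lcomp :: "'a set \<Rightarrow> 'a set \<Rightarrow> 'a set \<Rightarrow> 'm \<Rightarrow> 'm \<Rightarrow> 'm"
  lid :: "'a set \<Rightarrow> 'm"
  lpi :: "'a set \<Rightarrow> 'a set \<Rightarrow> 'm \<Rightarrow> ('a \<Rightarrow> 'a)"
  ldelta :: "'a set \<Rightarrow> 'a \<Rightarrow> 'm"

definition centric_linking_system ::
  "('a, 'b) monoid_scheme \<Rightarrow> 'a fusion \<Rightarrow> ('a, 'm) linking \<Rightarrow> bool" where
  "centric_linking_system S F L \<longleftrightarrow>
    (let Ob = {P. F_centric S F P}; M = lmor L; cmp = lcomp L; pi = lpi L; d = ldelta L in
     \<comment> \<open>category axioms\<close>
     (\<forall>P\<in>Ob. \<forall>Q\<in>Ob. \<forall>R\<in>Ob. \<forall>f\<in>M P Q. \<forall>g\<in>M Q R. cmp P Q R g f \<in> M P R) \<and>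
     (\<forall>P\<in>Ob. \<forall>Q\<in>Ob. \<forall>R\<in>Ob. \<forall>T\<in>Ob. \<forall>f\<in>M P Q. \<forall>g\<in>M Q R. \<forall>h\<in>M R T.
        cmp P R T h (cmp P Q R g f) = cmp P Q T (cmp Q R T h g) f) \<and>
     (\<forall>P\<in>Ob. lid L P \<in> M P P) \<and>
     (\<forall>P\<in>Ob. \<forall>Q\<in>Ob. \<forall>f\<in>M P Q. cmp P Q Q (lid L Q) f = f \<and> cmp P P Q f (lid L P) = f) \<and>
     \<comment> \<open>\<pi> is a functor L \<rightarrow> F^c, identity on objects\<close>
     (\<forall>P\<in>Ob. \<forall>Q\<in>Ob. \<forall>f\<in>M P Q. pi P Q f \<in> F P Q) \<and>
     (\<forall>P\<in>Ob. pi P P (lid L P) = restrict (\<lambda>x. x) P) \<and>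
     (\<forall>P\<in>Ob. \<forall>Q\<in>Ob. \<forall>R\<in>Ob. \<forall>f\<in>M P Q. \<forall>g\<in>M Q R.
        pi P R (cmp P Q R g f) = restrict (pi Q R g \<circ> pi P Q f) P) \<and>
     \<comment> \<open>\<delta>_P : P \<rightarrow> Aut_L(P) is an injective group homomorphism\<close>
     (\<forall>P\<in>Ob. (\<forall>g\<in>P. d P g \<in> M P P) \<and> d P \<one>\<^bsub>S\<^esub> = lid L P \<and>
        (\<forall>g\<in>P. \<forall>h\<in>P. d P (g \<otimes>\<^bsub>S\<^esub> h) = cmp P P P (d P g) (d P h)) \<and> inj_on (d P) P) \<and>
     \<comment> \<open>(A)\<close>
     (\<forall>P\<in>Ob. \<forall>Q\<in>Ob.
        (\<forall>f\<in>M P Q. \<forall>z\<in>ZS S P. cmp P P Q f (d P z) = f \<longrightarrow> z = \<one>\<^bsub>S\<^esub>) \<and>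
        pi P Q ` M P Q = F P Q \<and>
        (\<forall>f\<in>M P Q. \<forall>f'\<in>M P Q. pi P Q f = pi P Q f' \<longleftrightarrow> (\<exists>z\<in>ZS S P. f' = cmp P P Q f (d P z)))) \<and>
     \<comment> \<open>(B)\<close>
     (\<forall>P\<in>Ob. \<forall>g\<in>P. pi P P (d P g) = restrict (conjS S g) P) \<and>
     \<comment> \<open>(C)\<close>
     (\<forall>P\<in>Ob. \<forall>Q\<in>Ob. \<forall>f\<in>M P Q. \<forall>g\<in>P.
        cmp P P Q f (d P g) = cmp P Q Q (d Q (pi P Q f g)) f))"

definition p_local_finite_group ::
  "nat \<Rightarrow> ('a, 'b) monoid_scheme \<Rightarrow> 'a fusion \<Rightarrow> ('a, 'm) linking \<Rightarrow> bool" where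
  "p_local_finite_group p S F L \<longleftrightarrow> p_group p S \<and> saturated p S F \<and> centric_linking_system S F L"

definition nilpotent_plg ::
  "('a, 'b) monoid_scheme \<Rightarrow> 'a fusion \<Rightarrow> ('a, 'm) linking \<Rightarrow> bool" where
  "nilpotent_plg S F L \<longleftrightarrow> (\<forall>P Q. subgroup P S \<longrightarrow> subgroup Q S \<longrightarrow> F P Q = HomS S P Q)"

end

theory Submission
  imports Defs
begin

text \<open>In an abelian \<open>S\<close> all conjugation maps are identities, so \<open>\<F>\<^sub>S(S)\<close> has only inclusions
  as morphisms, and every subgroup is fully centralized with \<open>N\<^sub>\<phi> = S\<close>. Axiom (II) of saturation
  therefore extends every \<open>\<phi> \<in> Hom\<^sub>\<F>(P, S)\<close> to an element of \<open>Aut\<^sub>\<F>(S)\<close>. Hence \<open>\<F>\<close> is nilpotent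
  iff \<open>Aut\<^sub>\<F>(S)\<close> is trivial. Condition (1) implies (2), since each \<open>\<alpha> \<in> Aut\<^sub>\<F>(S)\<close> restricts to a
  morphism \<open>\<langle>a\<rangle> \<rightarrow> S\<close> sending \<open>a\<close> to \<open>\<alpha> a\<close>.\<close>

lemma fusion_system_HomS_subset:
  "fusion_system S F \<Longrightarrow> subgroup P S \<Longrightarrow> subgroup Q S \<Longrightarrow> HomS S P Q \<subseteq> F P Q"
  unfolding fusion_system_def by blast

lemma fusion_system_subset_InjS:
  "fusion_system S F \<Longrightarrow> subgroup P S \<Longrightarrow> subgroup Q S \<Longrightarrow> F P Q \<subseteq> InjS S P Q"
  unfolding fusion_system_def by blast

lemma fusion_system_comp:
  "fusion_system S F \<Longrightarrow> subgroup P S \<Longrightarrow> subgroup Q S \<Longrightarrow> subgroup R S \<Longrightarrow>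
   \<phi> \<in> F P Q \<Longrightarrow> \<psi> \<in> F Q R \<Longrightarrow> restrict (\<psi> \<circ> \<phi>) P \<in> F P R"
  unfolding fusion_system_def by blast

lemma saturated_fusion_system: "saturated p S F \<Longrightarrow> fusion_system S F"
  by (simp add: saturated_def)

lemma saturated_extension:
  "saturated p S F \<Longrightarrow> subgroup P S \<Longrightarrow> \<phi> \<in> F P (carrier S) \<Longrightarrow>
   fully_centralized S F (\<phi> ` P) \<Longrightarrow> \<exists>\<psi>\<in>F (Nphi S P \<phi>) (carrier S). \<forall>x\<in>P. \<psi> x = \<phi> x"
  unfolding saturated_def by blast

lemma fusion_morphism_image_subset:
  "fusion_system S F \<Longrightarrow> subgroup P S \<Longrightarrow> subgroup Q S \<Longrightarrow> \<phi> \<in> F P Q \<Longrightarrow> \<phi> ` P \<subseteq> Q"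
  using fusion_system_subset_InjS by (fastforce simp: InjS_def)

lemma fusion_morphism_extensional:
  "fusion_system S F \<Longrightarrow> subgroup P S \<Longrightarrow> subgroup Q S \<Longrightarrow> \<phi> \<in> F P Q \<Longrightarrow> \<phi> \<in> extensional P"
  using fusion_system_subset_InjS by (fastforce simp: InjS_def)

lemma (in group) conjS_one: "x \<in> carrier G \<Longrightarrow> conjS G \<one> x = x"
  by (simp add: conjS_def)

lemma (in group) inclusion_in_HomS:
  assumes "P \<subseteq> Q" "P \<subseteq> carrier G"
  shows "restrict (\<lambda>x. x) P \<in> HomS G P Q"
proof -
  have id: "conjS G \<one> x = x" if "x \<in> P" for x
    using assms(2) that conjS_one by blast
  have restr: "restrict (conjS G \<one>) P = restrict (\<lambda>x. x) P"
    using id by (rule restrict_ext)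
  have img: "conjS G \<one> ` P \<subseteq> Q"
    using assms(1) id by auto
  show ?thesis
    unfolding HomS_def mem_Collect_eq by (intro exI[of _ \<one>]) (simp add: restr img)
qed

lemma (in group) fusion_inclusion:
  assumes "fusion_system G F" "subgroup P G" "subgroup Q G" "P \<subseteq> Q"
  shows "restrict (\<lambda>x. x) P \<in> F P Q"
  using fusion_system_HomS_subset[OF assms(1-3)] inclusion_in_HomS[OF assms(4) subgroup.subset[OF assms(2)]]
  by blast

lemma (in group) fusion_enlarge_codomain:
  assumes F: "fusion_system G F" and P: "subgroup P G" and Q: "subgroup Q G" and R: "subgroup R G"
    and "Q \<subseteq> R" and \<phi>: "\<phi> \<in> F P Q"
  shows "\<phi> \<in> F P R"
proof -
  have "restrict (restrict (\<lambda>x. x) Q \<circ> \<phi>) P \<in> F P R"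
    using fusion_system_comp[OF F P Q R \<phi> fusion_inclusion[OF F Q R \<open>Q \<subseteq> R\<close>]] .
  moreover have "restrict (restrict (\<lambda>x. x) Q \<circ> \<phi>) P = \<phi>"
    using fusion_morphism_image_subset[OF F P Q \<phi>] fusion_morphism_extensional[OF F P Q \<phi>]
    by (intro extensionalityI[where A = P]) auto
  ultimately show ?thesis by simp
qed

lemma (in group) fusion_restrict_to_cyclic:
  assumes F: "fusion_system G F" and \<alpha>: "\<alpha> \<in> F (carrier G) (carrier G)" and a: "a \<in> carrier G"
  shows "F_conj_elt G F a (\<alpha> a)"
proof -
  let ?A = "generate G {a}"
  have A: "subgroup ?A G"
    using a by (intro generate_is_subgroup) simp
  have "restrict (\<alpha> \<circ> restrict (\<lambda>x. x) ?A) ?A \<in> F ?A (carrier G)"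
    using fusion_system_comp[OF F A subgroup_self subgroup_self
        fusion_inclusion[OF F A subgroup_self subgroup.subset[OF A]] \<alpha>] .
  moreover have "a \<in> ?A"
    by (rule generate.incl) simp
  ultimately show ?thesis
    unfolding F_conj_elt_def by (intro bexI) auto
qed

lemma (in group) F_conj_elt_trivial_imp_Aut_trivial:
  assumes F: "fusion_system G F"
    and conj: "\<forall>a\<in>carrier G. \<forall>b\<in>carrier G. F_conj_elt G F a b \<longleftrightarrow> a = b"
  shows "F (carrier G) (carrier G) = {restrict (\<lambda>x. x) (carrier G)}"
proof (intro equalityI subsetI)
  fix \<alpha> assume \<alpha>: "\<alpha> \<in> F (carrier G) (carrier G)"
  have "\<alpha> a = a" if a: "a \<in> carrier G" for a
  proof -
    have "\<alpha> a \<in> carrier G"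
      using fusion_morphism_image_subset[OF F subgroup_self subgroup_self \<alpha>] a by blast
    then show ?thesis
      using conj[rule_format, OF a] fusion_restrict_to_cyclic[OF F \<alpha> a] by simp
  qed
  then have "\<alpha> = restrict (\<lambda>x. x) (carrier G)"
    by (intro extensionalityI[OF fusion_morphism_extensional[OF F subgroup_self subgroup_self \<alpha>]]) auto
  then show "\<alpha> \<in> {restrict (\<lambda>x. x) (carrier G)}" by simp
qed (use fusion_inclusion[OF F subgroup_self subgroup_self] in simp)

lemma (in comm_group) conjS_comm: "g \<in> carrier G \<Longrightarrow> x \<in> carrier G \<Longrightarrow> conjS G g x = x"
  by (simp add: conjS_def m_comm[of g x] m_assoc)

lemma (in comm_group) HomS_comm:
  assumes "P \<subseteq> carrier G"
  shows "HomS G P Q = (if P \<subseteq> Q then {restrict (\<lambda>x. x) P} else {})"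
proof -
  have id: "conjS G g x = x" if "g \<in> carrier G" "x \<in> P" for g x
    using assms that conjS_comm by blast
  have "restrict (conjS G g) P = restrict (\<lambda>x. x) P" "conjS G g ` P = P" if "g \<in> carrier G" for g
    using id[OF that] by (auto intro: restrict_ext)
  then have "HomS G P Q \<subseteq> (if P \<subseteq> Q then {restrict (\<lambda>x. x) P} else {})"
    unfolding HomS_def by auto
  moreover have "P \<subseteq> Q \<Longrightarrow> restrict (\<lambda>x. x) P \<in> HomS G P Q"
    using inclusion_in_HomS assms by blast
  ultimately show ?thesis by (auto split: if_splits)
qed

lemma (in comm_group) fully_centralized_comm:
  assumes "Y \<subseteq> carrier G"
  shows "fully_centralized G F Y"
proof -
  have CS: "CS G Z = carrier G" if "Z \<subseteq> carrier G" for Z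
    using that m_comm unfolding CS_def by blast
  show ?thesis
    unfolding fully_centralized_def F_conj_sub_def
    using CS[OF assms] CS[OF subgroup.subset] by auto
qed

lemma (in comm_group) Nphi_comm:
  assumes P: "P \<subseteq> carrier G" and img: "\<phi> ` P \<subseteq> carrier G"
  shows "Nphi G P \<phi> = carrier G"
proof -
  have id: "conjS G g x = x" if "g \<in> carrier G" "x \<in> P" for g x
    using P that conjS_comm by blast
  then have "conjS G g ` P = P" if "g \<in> carrier G" for g
    using that by simp
  then have NS: "NS G P = carrier G"
    unfolding NS_def by blast
  have restr: "restrict (\<lambda>y. \<phi> (conjS G g (inv_into P \<phi> y))) (\<phi> ` P) = restrict (\<lambda>x. x) (\<phi> ` P)"
    if "g \<in> carrier G" for g
  proof (rule restrict_ext)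
    fix y assume "y \<in> \<phi> ` P"
    then show "\<phi> (conjS G g (inv_into P \<phi> y)) = y"
      using id[OF that inv_into_into[of y \<phi> P]] by (simp add: f_inv_into_f)
  qed
  have "restrict (\<lambda>x. x) (\<phi> ` P) \<in> HomS G (\<phi> ` P) (\<phi> ` P)"
    using inclusion_in_HomS img by blast
  then show ?thesis
    unfolding Nphi_def NS by (auto simp: restr)
qed

lemma (in comm_group) saturated_extends_to_Aut:
  assumes sat: "saturated p G F" and P: "subgroup P G" and \<phi>: "\<phi> \<in> F P (carrier G)"
  shows "\<exists>\<psi>\<in>F (carrier G) (carrier G). \<forall>x\<in>P. \<psi> x = \<phi> x"
proof -
  have img: "\<phi> ` P \<subseteq> carrier G"
    using fusion_morphism_image_subset[OF saturated_fusion_system[OF sat] P subgroup_self \<phi>] .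
  show ?thesis
    using saturated_extension[OF sat P \<phi> fully_centralized_comm[OF img]]
      Nphi_comm[OF subgroup.subset[OF P] img] by simp
qed

lemma (in comm_group) nilpotent_iff_Aut_trivial:
  assumes sat: "saturated p G F"
  shows "nilpotent_plg G F L \<longleftrightarrow> F (carrier G) (carrier G) = {restrict (\<lambda>x. x) (carrier G)}"
proof
  assume "nilpotent_plg G F L"
  then have "F (carrier G) (carrier G) = HomS G (carrier G) (carrier G)"
    unfolding nilpotent_plg_def using subgroup_self by blast
  also have "\<dots> = {restrict (\<lambda>x. x) (carrier G)}"
    using HomS_comm[OF subset_refl] by simp
  finally show "F (carrier G) (carrier G) = {restrict (\<lambda>x. x) (carrier G)}" .
next
  assume Aut: "F (carrier G) (carrier G) = {restrict (\<lambda>x. x) (carrier G)}"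
  have F: "fusion_system G F" using saturated_fusion_system[OF sat] .
  have "F P Q \<subseteq> HomS G P Q" if P: "subgroup P G" and Q: "subgroup Q G" for P Q
  proof
    fix \<phi> assume \<phi>: "\<phi> \<in> F P Q"
    obtain \<psi> where "\<psi> \<in> F (carrier G) (carrier G)" and \<psi>\<phi>: "\<forall>x\<in>P. \<psi> x = \<phi> x"
      using saturated_extends_to_Aut[OF sat P fusion_enlarge_codomain[OF F P Q subgroup_self _ \<phi>]]
        subgroup.subset[OF Q] by blast
    then have "\<psi> = restrict (\<lambda>x. x) (carrier G)"
      using Aut by blast
    then have \<phi>_id: "\<phi> x = x" if "x \<in> P" for x
      using \<psi>\<phi> that subgroup.subset[OF P] by force
    then have "P \<subseteq> Q"
      using fusion_morphism_image_subset[OF F P Q \<phi>] by force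
    moreover have "\<phi> = restrict (\<lambda>x. x) P"
      using \<phi>_id by (intro extensionalityI[OF fusion_morphism_extensional[OF F P Q \<phi>]]) auto
    ultimately show "\<phi> \<in> HomS G P Q"
      using inclusion_in_HomS subgroup.subset[OF P] by simp
  qed
  then show "nilpotent_plg G F L"
    unfolding nilpotent_plg_def using fusion_system_HomS_subset[OF F] by blast
qed

theorem corollary4p9:
  fixes p :: nat and S :: "('a, 'b) monoid_scheme" and F :: "'a fusion" and L :: "('a, 'm) linking"
  assumes "p_local_finite_group p S F L"
    and "comm_group S"
  shows "nilpotent_plg S F L \<longleftrightarrow>
           ((\<forall>a\<in>carrier S. \<forall>b\<in>carrier S. F_conj_elt S F a b \<longleftrightarrow> a = b) \<or>
            F (carrier S) (carrier S) = {restrict (\<lambda>x. x) (carrier S)})"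
proof -
  interpret comm_group S by fact
  have sat: "saturated p S F"
    using assms(1) by (simp add: p_local_finite_group_def)
  have conj_imp_Aut: "(\<forall>a\<in>carrier S. \<forall>b\<in>carrier S. F_conj_elt S F a b \<longleftrightarrow> a = b) \<Longrightarrow>
      F (carrier S) (carrier S) = {restrict (\<lambda>x. x) (carrier S)}"
    by (rule F_conj_elt_trivial_imp_Aut_trivial[OF saturated_fusion_system[OF sat]])
  show ?thesis
    unfolding nilpotent_iff_Aut_trivial[OF sat] using conj_imp_Aut by blast
qed

end
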